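(* Let $\mathcal{E}=[\theta,u]$ be an interval effect algebra that generates its ordered linear space, has an order-determining set of states, and is unrestricted. An effect $a\in\mathcal{E}$ is repeatable if and only if $a=\theta$ or there exists $s\in\mathcal{S}(\mathcal{E})$ with $s(a)=1$.
   Context: Let $V$ be a real vector space with zero $\theta$ and $K\subseteq V$ a positive cone ($\mathbb{R}^+K\subseteq K$, $K+K\subseteq K$, $K\cap(-K)=\{\theta\}$), ordered by $x\le y$ iff $y-x\in K$. For $u\in K$, $u\ne\theta$, $\mathcal{E}=[\theta,u]=\{x\in K:x\le u\}$; for $a,b\in\mathcal{E}$, $a\perp b$ means $a+b\le u$. $\mathcal{E}$ generates $V$ means $K=\mathbb{R}^+\mathcal{E}$ and $V=K-K$. A state is $s\colon\mathcal{E}\to[0,1]$ with $s(u)=1$ and $s(a+b)=s(a)+s(b)$ whenever $a\perp b$; $\mathcal{S}(\mathcal{E})$ is the set of all states, assumed order-determining: $a\le b$ iff $s(a)\le s(b)$ for all $s$. Affine = preserves finite convex combinations. Unrestricted: every affine $f\colon\mathcal{S}(\mathcal{E})\to[0,1]$ is of the form $f(s)=s(c)$ for some $c\in\mathcal{E}$. A substate is $\lambda s$, $\lambda\in[0,1]$, $s\in\mathcal{S}(\mathcal{E})$. An operation on $\mathcal{E}$ is an affine map $\mathcal{I}$ from $\mathcal{S}(\mathcal{E})$ to substates on $\mathcal{E}$; its dual $\mathcal{I}^*\colon\mathcal{E}\to\mathcal{E}$ is the unique affine map with $s[\mathcal{I}^*(b)]=\mathcal{I}(s)(b)$ for all $s,b$.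 An effect $a$ is $\mathcal{I}$-repeatable if $\mathcal{I}^*(u)=a$ and $\mathcal{I}^*(a)=a$; $a$ is repeatable if it is $\mathcal{I}$-repeatable for some operation $\mathcal{I}$ on $\mathcal{E}$. *)

theory Defs
  imports Main "HOL.Real_Vector_Spaces"
begin

text \<open>States are real functions on V that are supported on the
effects (value 0 outside), so that pointwise convex combinations of states
are again states.\<close>

definition positive_cone :: "'v::real_vector set \<Rightarrow> bool" where
  "positive_cone K \<longleftrightarrow>
     (\<forall>r x. 0 \<le> r \<and> x \<in> K \<longrightarrow> r *\<^sub>R x \<in> K) \<and>
     (\<forall>x\<in>K. \<forall>y\<in>K. x + y \<in> K) \<and>
     K \<inter> uminus ` K = {0}"

definition cle :: "'v::real_vector set \<Rightarrow> 'v \<Rightarrow> 'v \<Rightarrow> bool" where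
  "cle K x y \<longleftrightarrow> y - x \<in> K"

definition effects :: "'v::real_vector set \<Rightarrow> 'v \<Rightarrow> 'v set" where
  "effects K u = {x \<in> K. cle K x u}"

definition generates :: "'v::real_vector set \<Rightarrow> 'v \<Rightarrow> bool" where
  "generates K u \<longleftrightarrow>
     K = {r *\<^sub>R e | r e. 0 \<le> r \<and> e \<in> effects K u} \<and>
     (\<forall>v. \<exists>x\<in>K. \<exists>y\<in>K. v = x - y)"

definition states :: "'v::real_vector set \<Rightarrow> 'v \<Rightarrow> ('v \<Rightarrow> real) set" where
  "states K u = {s.
     (\<forall>a\<in>effects K u. 0 \<le> s a \<and> s a \<le> 1) \<and> s u = 1 \<and>
     (\<forall>a\<in>effects K u. \<forall>b\<in>effects K u. cle K (a + b) u \<longrightarrow> s (a + b) = s a + s b) \<and>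
     (\<forall>x. x \<notin> effects K u \<longrightarrow> s x = 0)}"

definition order_determining :: "'v::real_vector set \<Rightarrow> 'v \<Rightarrow> bool" where
  "order_determining K u \<longleftrightarrow>
     (\<forall>a\<in>effects K u. \<forall>b\<in>effects K u.
        cle K a b \<longleftrightarrow> (\<forall>s\<in>states K u. s a \<le> s b))"

definition affine_fun_on :: "('v \<Rightarrow> real) set \<Rightarrow> (('v \<Rightarrow> real) \<Rightarrow> real) \<Rightarrow> bool" where
  "affine_fun_on S f \<longleftrightarrow>
     (\<forall>s\<in>S. \<forall>t\<in>S. \<forall>l::real. 0 \<le> l \<and> l \<le> 1 \<longrightarrow>
        f (\<lambda>x. l * s x + (1 - l) * t x) = l * f s + (1 - l) * f t)"

definition unrestricted :: "'v::real_vector set \<Rightarrow> 'v \<Rightarrow> bool" where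
  "unrestricted K u \<longleftrightarrow>
     (\<forall>f :: ('v \<Rightarrow> real) \<Rightarrow> real.
        (\<forall>s\<in>states K u. 0 \<le> f s \<and> f s \<le> 1) \<and> affine_fun_on (states K u) f \<longrightarrow>
        (\<exists>c\<in>effects K u. \<forall>s\<in>states K u. f s = s c))"

definition substates :: "'v::real_vector set \<Rightarrow> 'v \<Rightarrow> ('v \<Rightarrow> real) set" where
  "substates K u = {(\<lambda>x. l * s x) | l s. 0 \<le> l \<and> l \<le> 1 \<and> s \<in> states K u}"

definition operation :: "'v::real_vector set \<Rightarrow> 'v \<Rightarrow> (('v \<Rightarrow> real) \<Rightarrow> ('v \<Rightarrow> real)) \<Rightarrow> bool" where
  "operation K u I \<longleftrightarrow>
     (\<forall>s\<in>states K u. I s \<in> substates K u) \<and>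
     (\<forall>s\<in>states K u. \<forall>t\<in>states K u. \<forall>l::real. 0 \<le> l \<and> l \<le> 1 \<longrightarrow>
        I (\<lambda>x. l * s x + (1 - l) * t x) = (\<lambda>x. l * I s x + (1 - l) * I t x))"

definition is_dual :: "'v::real_vector set \<Rightarrow> 'v \<Rightarrow> (('v \<Rightarrow> real) \<Rightarrow> ('v \<Rightarrow> real)) \<Rightarrow> ('v \<Rightarrow> 'v) \<Rightarrow> bool" where
  "is_dual K u I D \<longleftrightarrow>
     (\<forall>b\<in>effects K u. D b \<in> effects K u) \<and>
     (\<forall>a\<in>effects K u. \<forall>b\<in>effects K u. \<forall>l::real. 0 \<le> l \<and> l \<le> 1 \<longrightarrow>
        D (l *\<^sub>R a + (1 - l) *\<^sub>R b) = l *\<^sub>R D a + (1 - l) *\<^sub>R D b) \<and>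
     (\<forall>s\<in>states K u. \<forall>b\<in>effects K u. s (D b) = I s b)"

definition repeatable :: "'v::real_vector set \<Rightarrow> 'v \<Rightarrow> 'v \<Rightarrow> bool" where
  "repeatable K u a \<longleftrightarrow>
     (\<exists>I D. operation K u I \<and> is_dual K u I D \<and> D u = a \<and> D a = a)"

end

theory Submission
  imports Defs
begin

text \<open>If \<open>a\<close> is repeatable through the operation \<open>I\<close> with dual \<open>D\<close> and
  \<open>I s = l * t\<close>, then \<open>l = l * t u = s (D u) = s a\<close> and \<open>l * t a = s (D a) = s a\<close>, so
  \<open>t a = 1\<close> as soon as \<open>s a \<noteq> 0\<close>; such an \<open>s\<close> exists for \<open>a \<noteq> 0\<close> because the states
  determine the order and the cone is pointed.  Conversely, if \<open>s\<^sub>0 a = 1\<close>, then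
  \<open>I s = s a * s\<^sub>0\<close> with dual \<open>b \<mapsto> s\<^sub>0 b *\<^sub>R a\<close> makes \<open>a\<close> repeatable.  The only analytic
  input is that states are affine on effects, because an additive nonnegative function on
  \<open>[0, 1]\<close> is linear.\<close>

lemma additive_nonneg_imp_linear_on_unit_interval:
  fixes f :: "real \<Rightarrow> real"
  assumes add: "\<And>x y. 0 \<le> x \<Longrightarrow> 0 \<le> y \<Longrightarrow> x + y \<le> 1 \<Longrightarrow> f (x + y) = f x + f y"
    and nonneg: "\<And>x. 0 \<le> x \<Longrightarrow> x \<le> 1 \<Longrightarrow> 0 \<le> f x"
    and "0 \<le> r" "r \<le> 1"
  shows "f r = r * f 1"
proof -
  have mono: "f x \<le> f y" if "0 \<le> x" "x \<le> y" "y \<le> 1" for x y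
    using add[of x "y - x"] nonneg[of "y - x"] that by simp
  have mult: "f (real k * h) = real k * f h" if "0 \<le> h" "real k * h \<le> 1" for k h
    using that
  proof (induction k)
    case 0
    show ?case using add[of 0 0] by simp
  next
    case (Suc k)
    then have "real k * h \<le> 1" by (simp add: distrib_right)
    then show ?case using add[of "real k * h" h] Suc by (simp add: algebra_simps)
  qed
  have approx: "s * f 1 \<le> f s + f 1 / real n" if "0 \<le> s" "s \<le> 1" "n > 0" for s n
  proof -
    define k where "k = nat \<lfloor>real n * s\<rfloor>"
    have "0 \<le> real n * s"
      using that by simp
    then have k: "real k \<le> real n * s" "real n * s < real k + 1"
      unfolding k_def by linarith+
    have "real k \<le> real n"
      using k that mult_left_le[of s "real n"] by linarith
    then have "f (real k / real n) = real k * f (1 / real n)"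
      using mult[of "1 / real n" k] that by simp
    moreover have "f 1 = real n * f (1 / real n)"
      using mult[of "1 / real n" n] that by simp
    ultimately have fk: "f (real k / real n) = real k / real n * f 1"
      using that by simp
    have "s \<le> (real k + 1) / real n"
      using k that by (simp add: field_simps)
    then have "s * f 1 \<le> (real k + 1) / real n * f 1"
      using nonneg[of 1] by (intro mult_right_mono) auto
    also have "\<dots> = f (real k / real n) + f 1 / real n"
      using fk by (simp add: add_divide_distrib distrib_right)
    also have "\<dots> \<le> f s + f 1 / real n"
      using mono[of "real k / real n" s] k that by (simp add: field_simps)
    finally show ?thesis .
  qed
  have lower: "s * f 1 \<le> f s" if "0 \<le> s" "s \<le> 1" for s
  proof (rule ccontr)
    assume "\<not> ?thesis"
    then obtain n where n: "f 1 < real n * (s * f 1 - f s)"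
      using ex_less_of_nat_mult[of "s * f 1 - f s"] by auto
    then have "n > 0"
      using nonneg[of 1] by (cases n) auto
    then show False
      using approx[OF that \<open>n > 0\<close>] n by (simp add: field_simps)
  qed
  have "f 1 = f r + f (1 - r)"
    using add[of r "1 - r"] assms by simp
  then show ?thesis
    using lower[of r] lower[of "1 - r"] assms by (simp add: algebra_simps)
qed

lemma effects_iff: "x \<in> effects K u \<longleftrightarrow> x \<in> K \<and> u - x \<in> K"
  unfolding effects_def cle_def by simp

locale interval_effect_algebra =
  fixes K :: "'v::real_vector set" and u :: 'v
  assumes cone: "positive_cone K" and unit_in_cone: "u \<in> K"
begin

lemma cone_scaleR: "0 \<le> r \<Longrightarrow> x \<in> K \<Longrightarrow> r *\<^sub>R x \<in> K"
  using cone unfolding positive_cone_def by blast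

lemma cone_add: "x \<in> K \<Longrightarrow> y \<in> K \<Longrightarrow> x + y \<in> K"
  using cone unfolding positive_cone_def by blast

lemma zero_in_cone: "0 \<in> K"
  using cone_scaleR[of 0 u] unit_in_cone by simp

lemma cone_pointed: "x \<in> K \<Longrightarrow> - x \<in> K \<Longrightarrow> x = 0"
  using cone unfolding positive_cone_def by force

lemma zero_effect: "0 \<in> effects K u"
  using zero_in_cone unit_in_cone by (simp add: effects_iff)

lemma unit_effect: "u \<in> effects K u"
  using zero_in_cone unit_in_cone by (simp add: effects_iff)

lemma effect_convex:
  assumes "x \<in> effects K u" "y \<in> effects K u" "0 \<le> l" "l \<le> 1"
  shows "l *\<^sub>R x + (1 - l) *\<^sub>R y \<in> effects K u"
proof -
  have "u - (l *\<^sub>R x + (1 - l) *\<^sub>R y) = l *\<^sub>R (u - x) + (1 - l) *\<^sub>R (u - y)"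
    by (simp add: algebra_simps)
  with assms show ?thesis
    by (simp add: effects_iff cone_add cone_scaleR)
qed

lemma effect_scaleR: "x \<in> effects K u \<Longrightarrow> 0 \<le> r \<Longrightarrow> r \<le> 1 \<Longrightarrow> r *\<^sub>R x \<in> effects K u"
  using effect_convex[of x 0 r] zero_effect by simp

lemma state_bounds: "s \<in> states K u \<Longrightarrow> x \<in> effects K u \<Longrightarrow> 0 \<le> s x \<and> s x \<le> 1"
  unfolding states_def by blast

lemma state_unit: "s \<in> states K u \<Longrightarrow> s u = 1"
  unfolding states_def by blast

lemma state_add:
  "s \<in> states K u \<Longrightarrow> x \<in> effects K u \<Longrightarrow> y \<in> effects K u \<Longrightarrow> x + y \<in> effects K u
    \<Longrightarrow> s (x + y) = s x + s y"
  unfolding states_def effects_def by blast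

lemma state_zero: "s \<in> states K u \<Longrightarrow> s 0 = 0"
  using state_add[of s 0 0] zero_effect by simp

lemma state_scaleR:
  assumes s: "s \<in> states K u" and x: "x \<in> effects K u" and "0 \<le> r" "r \<le> 1"
  shows "s (r *\<^sub>R x) = r * s x"
proof -
  have "s ((a + b) *\<^sub>R x) = s (a *\<^sub>R x) + s (b *\<^sub>R x)"
    if "0 \<le> a" "0 \<le> b" "a + b \<le> 1" for a b
    using state_add[OF s effect_scaleR[OF x, of a] effect_scaleR[OF x, of b]]
      effect_scaleR[OF x, of "a + b"] that
    by (simp add: scaleR_add_left)
  moreover have "0 \<le> s (a *\<^sub>R x)" if "0 \<le> a" "a \<le> 1" for a
    using state_bounds[OF s] effect_scaleR[OF x] that by simp
  ultimately show ?thesis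
    using additive_nonneg_imp_linear_on_unit_interval[of "\<lambda>t. s (t *\<^sub>R x)" r] assms
    by simp
qed

lemma state_convex:
  assumes s: "s \<in> states K u" and "x \<in> effects K u" "y \<in> effects K u" "0 \<le> l" "l \<le> 1"
  shows "s (l *\<^sub>R x + (1 - l) *\<^sub>R y) = l * s x + (1 - l) * s y"
  using state_add[OF s, of "l *\<^sub>R x" "(1 - l) *\<^sub>R y"] effect_convex effect_scaleR
    state_scaleR[OF s] assms by simp

lemma order_determining_imp_state_pos:
  assumes "order_determining K u" "a \<in> effects K u" "a \<noteq> 0"
  shows "\<exists>s\<in>states K u. 0 < s a"
proof (rule ccontr)
  assume "\<not> ?thesis"
  then have "cle K a 0"
    using assms zero_effect state_zero unfolding order_determining_def by (metis not_less)
  then show False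
    using assms cone_pointed[of a] by (simp add: cle_def effects_iff)
qed

lemma repeatable_imp_state_eq_1:
  assumes "repeatable K u a" "a \<in> effects K u" "s \<in> states K u" "s a \<noteq> 0"
  shows "\<exists>t\<in>states K u. t a = 1"
proof -
  obtain I D where op: "operation K u I" and dual: "is_dual K u I D"
    and "D u = a" "D a = a"
    using assms(1) unfolding repeatable_def by blast
  obtain l t where Is: "I s = (\<lambda>x. l * t x)" and t: "t \<in> states K u"
    using op assms(3) unfolding operation_def substates_def by blast
  have "s a = l * t u"
    using dual assms(3) unit_effect \<open>D u = a\<close> Is unfolding is_dual_def by metis
  also have "\<dots> = l"
    using state_unit[OF t] by simp
  finally have "s a = l" .
  moreover have "s a = l * t a"
    using dual assms(2,3) \<open>D a = a\<close> Is unfolding is_dual_def by metis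
  ultimately have "t a = 1"
    using assms(4) by simp
  with t show ?thesis by blast
qed

lemma repeatable_zero:
  assumes "t \<in> states K u"
  shows "repeatable K u 0"
proof -
  have "(\<lambda>x. 0) \<in> substates K u"
    using assms unfolding substates_def by force
  then have "operation K u (\<lambda>s x. 0)"
    unfolding operation_def by simp
  moreover have "is_dual K u (\<lambda>s x. 0) (\<lambda>b. 0)"
    unfolding is_dual_def using zero_effect state_zero by simp
  ultimately show ?thesis
    unfolding repeatable_def by blast
qed

lemma state_eq_1_imp_repeatable:
  assumes a: "a \<in> effects K u" and s\<^sub>0: "s\<^sub>0 \<in> states K u" "s\<^sub>0 a = 1"
  shows "repeatable K u a"
proof -
  define I where "I s = (\<lambda>x. s a * s\<^sub>0 x)" for s :: "'v \<Rightarrow> real"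
  define D where "D b = s\<^sub>0 b *\<^sub>R a" for b
  have "operation K u I"
    unfolding operation_def
  proof (intro conjI ballI allI impI)
    fix s assume "s \<in> states K u"
    then show "I s \<in> substates K u"
      unfolding substates_def I_def using state_bounds a s\<^sub>0 by blast
  next
    fix s t and l :: real
    show "I (\<lambda>x. l * s x + (1 - l) * t x) = (\<lambda>x. l * I s x + (1 - l) * I t x)"
      unfolding I_def by (simp add: algebra_simps)
  qed
  moreover have "is_dual K u I D"
    unfolding is_dual_def
  proof (intro conjI ballI allI impI)
    fix b assume "b \<in> effects K u"
    then show "D b \<in> effects K u"
      unfolding D_def using effect_scaleR[OF a] state_bounds[OF s\<^sub>0(1)] by simp
  next
    fix x y and l :: real
    assume "x \<in> effects K u" "y \<in> effects K u" "0 \<le> l \<and> l \<le> 1"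
    then show "D (l *\<^sub>R x + (1 - l) *\<^sub>R y) = l *\<^sub>R D x + (1 - l) *\<^sub>R D y"
      unfolding D_def using state_convex[OF s\<^sub>0(1)] by (simp add: scaleR_add_left)
  next
    fix s b assume "s \<in> states K u" "b \<in> effects K u"
    then show "s (D b) = I s b"
      unfolding D_def I_def using state_scaleR a state_bounds[OF s\<^sub>0(1)] by (simp add: mult.commute)
  qed
  moreover have "D u = a" "D a = a"
    unfolding D_def using state_unit[OF s\<^sub>0(1)] s\<^sub>0(2) by simp_all
  ultimately show ?thesis
    unfolding repeatable_def by blast
qed

end

theorem corollary3p4:
  fixes K :: "'v::real_vector set" and u a :: 'v
  assumes "positive_cone K"
    and "u \<in> K" and "u \<noteq> 0"
    and "generates K u"
    and "order_determining K u"
    and "unrestricted K u"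
    and "a \<in> effects K u"
  shows "repeatable K u a \<longleftrightarrow> a = 0 \<or> (\<exists>s\<in>states K u. s a = 1)"
proof -
  interpret interval_effect_algebra K u
    using assms(1,2) by unfold_locales
  show ?thesis
  proof
    assume "repeatable K u a"
    then show "a = 0 \<or> (\<exists>s\<in>states K u. s a = 1)"
      using order_determining_imp_state_pos[OF assms(5,7)] repeatable_imp_state_eq_1 assms(7)
      by force
  next
    obtain t where "t \<in> states K u"
      using order_determining_imp_state_pos[OF assms(5) unit_effect assms(3)] by blast
    then show "repeatable K u a" if "a = 0 \<or> (\<exists>s\<in>states K u. s a = 1)"
      using that repeatable_zero state_eq_1_imp_repeatable[OF assms(7)] by blast
  qed
qed

end
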